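(* Assume the model (M.2) with $M_0>0$ and the sub-Gaussian condition (A.4) described in the context, and let Algorithm 2 be applied to $X_1,\ldots,X_N$. Let $C>64D/c_0$ be a constant. (i) For $k\in\{1,\ldots,M_0\}$ and an integer $\eta=\eta(N)$ with $1\le\eta\le N_{k+1}$, let $E_{k,N}$ be the event that there exist integers $0\le n_1<n_2<N_k$ and $1\le n_3\le\eta$ such that $\{X^{(k)}_n:n=n_1+1,\ldots,n_2\}$ and $\{X^{(k)}_n:n=n_2+1,\ldots,N_k\}\cup\{X^{(k+1)}_n:n=1,\ldots,n_3\}$ are two detected segments. If $f(N)\ge\max\{16|\mu_k-\mu_{k+1}|^2\eta,\ C\log N\}$, then $\Pr(\limsup_{N\to\infty}E_{k,N})=0$. (ii) For $k\in\{2,\ldots,M_0+1\}$ and an integer $\eta=\eta(N)$ with $1\le\eta\le N_{k-1}$, let $\tilde E_{k,N}$ be the event that there exist integers $1\le n_1<n_2\le N_k$ and $1\le n_3\le\eta$ such that $\{X^{(k-1)}_n:n=N_{k-1}-n_3+1,\ldots,N_{k-1}\}\cup\{X^{(k)}_n:n=1,\ldots,n_1\}$ and $\{X^{(k)}_n:n=n_1+1,\ldots,n_2\}$ are two detected segments. If $f(N)\ge\max\{16|\mu_{k-1}-\mu_k|^2\eta,\ C\log N\}$, then $\Pr(\limsup_{N\to\infty}\tilde E_{k,N})=0$.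
   Context: Model (M.2): for each sample size $N$ one observes independent random vectors $X_1,\ldots,X_N\in\mathbb{R}^D$ ($D\in\mathbb{N}$ fixed). There are $M_0\ge 0$ (fixed) change points $0=L_0<L_1<\cdots<L_{M_0}<L_{M_0+1}=N$ (depending on $N$), with segment sizes $N_k=L_k-L_{k-1}$, $N_k\to\infty$; for each $k$, $X_{L_{k-1}+1},\ldots,X_{L_k}$ are i.i.d. with distribution $\mathcal{G}_k$ with mean $\mu_k$ and finite covariance; $\mu_k\neq\mu_{k+1}$. Write $X^{(k)}_n=X_{L_{k-1}+n}$, $n=1,\ldots,N_k$. (A.4): there is $c_0>0$ such that for every $k$, coordinate $d$, $n\ge1$ and $a>0$, the mean $\bar Z$ of $n$ i.i.d. copies of the $d$-th marginal of $\mathcal{G}_k$ satisfies $\Pr(|\bar Z-E\bar Z|\ge a)\le2e^{-c_0a^2n}$. Quadratic loss: $\mathrm{Loss}_q(x_a,\ldots,x_b)=\sum_{n=a}^b|x_n-\bar x|^2$, $\bar x$ the sample mean, $|\cdot|$ Euclidean norm. Algorithm 2 (inputs $M_{\max}\ge1$, penalty $f(N)>0$, minimal segment size $\beta(N)$): for $k=0,1,\ldots,M_{\max}$ compute $\hat e_k=\min\sum_{j=1}^{k+1}\mathrm{Loss}_q(x_{\ell_{j-1}+1},\ldots,x_{\ell_j})$ over $0=\ell_0<\ell_1<\cdots<\ell_{k+1}=N$ with a minimizer; if its smallest segment has size $<\beta(N)$, set $M=k-1$ and stop (else $M=M_{\max}$). Output $\hat M=\arg\min_{0\le k\le M}(\hat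 e_k+kf(N))$ and the change points $\hat\ell_1<\cdots<\hat\ell_{\hat M}$ of the minimizer for $k=\hat M$. The detected segments are the blocks $\{X_n:n=\hat\ell_{j-1}+1,\ldots,\hat\ell_j\}$, $j=1,\ldots,\hat M+1$ ($\hat\ell_0=0,\hat\ell_{\hat M+1}=N$); "two detected segments" means two neighboring ones, in the order listed. $\limsup_N E_N$ is the event that $E_N$ occurs for infinitely many $N$. *)

theory Defs
  imports "HOL-Probability.Probability"
begin

text \<open>Data of a sample of size N: a function x with observations x 1, ..., x N.\<close>

definition seg_mean :: "(nat \<Rightarrow> real^'d) \<Rightarrow> nat \<Rightarrow> nat \<Rightarrow> real^'d" where
  "seg_mean x a b = (1 / real (b + 1 - a)) *\<^sub>R (\<Sum>n=a..b. x n)"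

definition loss_q :: "(nat \<Rightarrow> real^'d) \<Rightarrow> nat \<Rightarrow> nat \<Rightarrow> real" where
  "loss_q x a b = (\<Sum>n=a..b. (norm (x n - seg_mean x a b))\<^sup>2)"

definition valid_part :: "nat \<Rightarrow> nat \<Rightarrow> (nat \<Rightarrow> nat) \<Rightarrow> bool" where
  "valid_part N k l \<longleftrightarrow> l 0 = 0 \<and> l (k + 1) = N \<and> (\<forall>j\<le>k. l j < l (Suc j))"

definition seg_cost :: "(nat \<Rightarrow> real^'d) \<Rightarrow> nat \<Rightarrow> (nat \<Rightarrow> nat) \<Rightarrow> real" where
  "seg_cost x k l = (\<Sum>j=1..k+1. loss_q x (l (j - 1) + 1) (l j))"

definition is_minimizer :: "nat \<Rightarrow> (nat \<Rightarrow> real^'d) \<Rightarrow> nat \<Rightarrow> (nat \<Rightarrow> nat) \<Rightarrow> bool" where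
  "is_minimizer N x k l \<longleftrightarrow> valid_part N k l \<and>
     (\<forall>l'. valid_part N k l' \<longrightarrow> seg_cost x k l \<le> seg_cost x k l')"

definition min_seg_size :: "nat \<Rightarrow> (nat \<Rightarrow> nat) \<Rightarrow> nat" where
  "min_seg_size k l = Min ((\<lambda>j. l j - l (j - 1)) ` {1..k+1})"

text \<open>The algorithm uses a minimizer-selection rule sel: sel N x k is the minimizer used
  for k change points (sample size N, data x).  The stopping index M of Algorithm 2:
  the first k \<le> Mmax whose minimizer has a segment shorter than beta N gives M = k - 1
  (a k with no admissible segmentation, i.e. k \<ge> N, is also treated as a stop).\<close>
definition stop_bad :: "(nat \<Rightarrow> (nat \<Rightarrow> real^'d) \<Rightarrow> nat \<Rightarrow> nat \<Rightarrow> nat) \<Rightarrow> (nat \<Rightarrow> nat)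
    \<Rightarrow> nat \<Rightarrow> (nat \<Rightarrow> real^'d) \<Rightarrow> nat \<Rightarrow> bool" where
  "stop_bad sel beta N x k \<longleftrightarrow> N \<le> k \<or> min_seg_size k (sel N x k) < beta N"

definition stop_index :: "(nat \<Rightarrow> (nat \<Rightarrow> real^'d) \<Rightarrow> nat \<Rightarrow> nat \<Rightarrow> nat) \<Rightarrow> nat \<Rightarrow> (nat \<Rightarrow> nat)
    \<Rightarrow> nat \<Rightarrow> (nat \<Rightarrow> real^'d) \<Rightarrow> nat" where
  "stop_index sel Mmax beta N x =
     (if \<exists>k\<le>Mmax. stop_bad sel beta N x k
      then (LEAST k. k \<le> Mmax \<and> stop_bad sel beta N x k) - 1 else Mmax)"

definition pen_crit :: "(nat \<Rightarrow> (nat \<Rightarrow> real^'d) \<Rightarrow> nat \<Rightarrow> nat \<Rightarrow> nat) \<Rightarrow> (nat \<Rightarrow> real)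
    \<Rightarrow> nat \<Rightarrow> (nat \<Rightarrow> real^'d) \<Rightarrow> nat \<Rightarrow> real" where
  "pen_crit sel f N x k = seg_cost x k (sel N x k) + real k * f N"

text \<open>Two neighbouring detected segments {a+1..b} and {b+1..c} (global indices) of the
  output segmentation l with m change points.\<close>
definition two_detected :: "(nat \<Rightarrow> nat) \<Rightarrow> nat \<Rightarrow> nat \<Rightarrow> nat \<Rightarrow> nat \<Rightarrow> bool" where
  "two_detected l m a b c \<longleftrightarrow> (\<exists>j. 1 \<le> j \<and> j \<le> m \<and> l (j - 1) = a \<and> l j = b \<and> l (j + 1) = c)"

end

theory Submission
  imports Defs
begin

text \<open>If two neighbouring detected segments were merged, the output would lose one change point
  and gain the merge cost, the increase of quadratic loss, which equals
  nA nB / (nA + nB) times the squared distance of the two block means; optimality of the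
  penalized criterion therefore forces this merge gain to be at least f(N).  In the situations
  of (i) and (ii) one of the two segments spills at most \<eta> observations across a true change
  point, and every other piece is homogeneous.  By (A.4), a union bound over the O(N^2)
  homogeneous blocks and Borel--Cantelli, almost surely for all large N every homogeneous block
  deviates from its mean by less than its size times C ln N / 16 in squared norm.  Splitting the
  difference of the two block means into three such fluctuations plus the shift caused by the
  spilled observations, each part contributes less than f(N) / 16 to the weighted square, so the
  merge gain is below f(N): a contradiction.\<close>

lemma borel_measurable_vec_nth[measurable]:
  "(\<lambda>x::'a::topological_space^'n. x $ i) \<in> borel_measurable borel"
  by (rule borel_measurable_continuous_onI) (intro continuous_intros)

lemma (in prob_space) distr_iid_block_eq_PiM:
  fixes Y :: "nat \<Rightarrow> 'a \<Rightarrow> 'b::topological_space" and H :: "'b measure"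
  assumes indep: "indep_vars (\<lambda>_. borel) Y {p<..p+n}" and n: "n \<ge> 1"
    and distr_Y: "\<And>j. j \<in> {p<..p+n} \<Longrightarrow> distr M borel (Y j) = H"
  shows "distr M (PiM {1..n} (\<lambda>_. H)) (\<lambda>\<omega>. \<lambda>j\<in>{1..n}. Y (p + j) \<omega>) = PiM {1..n} (\<lambda>_. H)"
proof -
  define I where "I = {p<..p+n}"
  have sets_H: "sets H = sets borel" using distr_Y[of "p + n"] n by auto
  have meas_Y: "Y j \<in> measurable M H" if "j \<in> I" for j
  proof -
    have "Y j \<in> borel_measurable M" using indep that unfolding indep_vars_def I_def by auto
    then show ?thesis using measurable_cong_sets[OF refl sets_H] by blast
  qed
  have H: "prob_space H"
  proof -
    have "p + n \<in> I" using n by (simp add: I_def)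
    then have "prob_space (distr M H (Y (p + n)))" by (intro prob_space_distr meas_Y)
    also have "distr M H (Y (p + n)) = H"
      using distr_Y[of "p + n"] n by (subst distr_cong[OF refl sets_H refl]) auto
    finally show ?thesis .
  qed
  have joint: "distr M (PiM I (\<lambda>_. H)) (\<lambda>\<omega>. \<lambda>j\<in>I. Y j \<omega>) = PiM I (\<lambda>_. H)"
  proof -
    have "distr M (PiM I (\<lambda>_. H)) (\<lambda>\<omega>. \<lambda>j\<in>I. Y j \<omega>)
        = distr M (PiM I (\<lambda>_. borel)) (\<lambda>\<omega>. \<lambda>j\<in>I. Y j \<omega>)"
      by (intro distr_cong sets_PiM_cong) (auto simp: sets_H)
    also have "\<dots> = PiM I (\<lambda>j. distr M borel (Y j))"
    proof (rule indep_vars_iff_distr_eq_PiM'[THEN iffD1])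
      show "I \<noteq> {}" using n by (auto simp: I_def)
      show "indep_vars (\<lambda>_. borel) Y I" using indep by (simp add: I_def)
      show "Y j \<in> borel_measurable M" if "j \<in> I" for j
        using meas_Y[OF that] measurable_cong_sets[OF refl sets_H] by blast
    qed
    also have "\<dots> = PiM I (\<lambda>_. H)" by (rule PiM_cong) (auto simp: I_def distr_Y)
    finally show ?thesis .
  qed
  have shift: "distr (PiM I (\<lambda>_. H)) (PiM {1..n} (\<lambda>_. H)) (\<lambda>\<omega>. \<lambda>j\<in>{1..n}. \<omega> (p + j))
      = PiM {1..n} (\<lambda>_. H)"
    by (rule distr_PiM_reindex[where M="\<lambda>_. H" and f="\<lambda>j. p + j", simplified])
       (auto simp: H I_def inj_on_def)
  have "distr M (PiM {1..n} (\<lambda>_. H)) (\<lambda>\<omega>. \<lambda>j\<in>{1..n}. Y (p + j) \<omega>)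
      = distr M (PiM {1..n} (\<lambda>_. H)) ((\<lambda>\<omega>. \<lambda>j\<in>{1..n}. \<omega> (p + j)) \<circ> (\<lambda>\<omega>. \<lambda>j\<in>I. Y j \<omega>))"
    by (rule distr_cong) (auto simp: I_def fun_eq_iff)
  also have "\<dots> = distr (distr M (PiM I (\<lambda>_. H)) (\<lambda>\<omega>. \<lambda>j\<in>I. Y j \<omega>))
      (PiM {1..n} (\<lambda>_. H)) (\<lambda>\<omega>. \<lambda>j\<in>{1..n}. \<omega> (p + j))"
    by (intro distr_distr[symmetric] measurable_restrict measurable_component_singleton meas_Y)
       (auto simp: I_def)
  finally show ?thesis unfolding joint shift .
qed

lemma mult_le_power2_diff_iff_sqrt_le:
  fixes t n m s :: real
  assumes "n > 0" "s > 0"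
  shows "n * s \<le> (t - n * m)\<^sup>2 \<longleftrightarrow> sqrt (s / n) \<le> \<bar>t / n - m\<bar>"
proof -
  have "\<bar>t / n - m\<bar> = sqrt (((t - n * m) / n)\<^sup>2)"
    unfolding real_sqrt_abs using assms by (simp add: field_simps)
  then have "sqrt (s / n) \<le> \<bar>t / n - m\<bar> \<longleftrightarrow> s / n \<le> ((t - n * m) / n)\<^sup>2"
    by (simp only: real_sqrt_le_iff)
  also have "\<dots> \<longleftrightarrow> n * s \<le> (t - n * m)\<^sup>2"
    using assms by (simp add: field_simps power2_eq_square)
  finally show ?thesis by simp
qed

lemma (in prob_space) iid_sum_tail:
  fixes Y :: "nat \<Rightarrow> 'a \<Rightarrow> real" and H :: "real measure"
  assumes indep: "indep_vars (\<lambda>_. borel) Y {p<..q}" and pq: "p < q"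
    and distr_Y: "\<And>j. j \<in> {p<..q} \<Longrightarrow> distr M borel (Y j) = H"
    and subG: "\<forall>n\<ge>1. \<forall>a>0.
        measure (PiM {1..n} (\<lambda>_. H)) {z \<in> space (PiM {1..n} (\<lambda>_. H)).
          \<bar>(\<Sum>j=1..n. z j) / real n - m\<bar> \<ge> a} \<le> 2 * exp (- c0 * a\<^sup>2 * real n)"
    and s: "s > 0"
  shows "measure M {\<omega>\<in>space M. real (q - p) * s \<le> (\<Sum>j\<in>{p<..q}. Y j \<omega> - m)\<^sup>2}
     \<le> 2 * exp (- c0 * s)"
proof -
  define n where "n = q - p"
  have n: "n \<ge> 1" and q: "q = p + n" using pq by (auto simp: n_def)
  have sets_H: "sets H = sets borel" using distr_Y[of q] pq by auto
  define h where "h = (\<lambda>\<omega>. \<lambda>j\<in>{1..n}. Y (p + j) \<omega>)"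
  have law: "distr M (PiM {1..n} (\<lambda>_. H)) h = PiM {1..n} (\<lambda>_. H)"
    unfolding h_def using indep distr_Y by (intro distr_iid_block_eq_PiM[OF _ n]) (auto simp: q)
  have meas_h: "h \<in> measurable M (PiM {1..n} (\<lambda>_. H))"
    unfolding h_def
  proof (rule measurable_restrict)
    fix j assume "j \<in> {1..n}"
    then have "Y (p + j) \<in> borel_measurable M" using indep unfolding indep_vars_def q by auto
    then show "Y (p + j) \<in> measurable M H" using measurable_cong_sets[OF refl sets_H] by blast
  qed
  define a where "a = sqrt (s / real n)"
  define E where "E = {z \<in> space (PiM {1..n} (\<lambda>_. H)). \<bar>(\<Sum>j=1..n. z j) / real n - m\<bar> \<ge> a}"
  have "E = {z \<in> space (PiM {1..n} (\<lambda>_. borel)). \<bar>(\<Sum>j=1..n. z j) / real n - m\<bar> \<ge> a}"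
    unfolding E_def by (simp add: space_PiM sets_eq_imp_space_eq[OF sets_H])
  also have "\<dots> \<in> sets (PiM {1..n} (\<lambda>_. borel))" by measurable
  finally have sets_E: "E \<in> sets (PiM {1..n} (\<lambda>_. H))"
    by (subst sets_PiM_cong[OF refl sets_H])
  have event: "{\<omega>\<in>space M. real (q - p) * s \<le> (\<Sum>j\<in>{p<..q}. Y j \<omega> - m)\<^sup>2} = h -` E \<inter> space M"
  proof -
    have "(\<Sum>j\<in>{p<..q}. Y j \<omega>) = (\<Sum>j=1..n. Y (p + j) \<omega>)" for \<omega>
      by (rule sum.reindex_bij_witness[of _ "\<lambda>j. p + j" "\<lambda>j. j - p"]) (auto simp: q)
    then have "(\<Sum>j\<in>{p<..q}. Y j \<omega> - m) = (\<Sum>j=1..n. h \<omega> j) - real n * m" for \<omega>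
      by (simp add: h_def sum_subtractf n_def)
    then show ?thesis
      using measurable_space[OF meas_h] mult_le_power2_diff_iff_sqrt_le[of "real n" s] n s
      by (auto simp: E_def a_def n_def)
  qed
  have "measure M (h -` E \<inter> space M) = measure (PiM {1..n} (\<lambda>_. H)) E"
    using measure_distr[OF meas_h sets_E] unfolding law by simp
  also have "\<dots> \<le> 2 * exp (- c0 * a\<^sup>2 * real n)"
    using subG[rule_format, OF n, of a] n s unfolding E_def by (simp add: a_def)
  also have "- c0 * a\<^sup>2 * real n = - c0 * s" using s n by (simp add: a_def)
  finally show ?thesis unfolding event .
qed

lemma (in prob_space) iid_coordinate_sum_tail:
  fixes X :: "nat \<Rightarrow> 'a \<Rightarrow> real^'d" and G :: "(real^'d) measure"
  assumes indep: "indep_vars (\<lambda>_. borel) X {p<..q}" and pq: "p < q"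
    and distr_X: "\<And>j. j \<in> {p<..q} \<Longrightarrow> distr M borel (X j) = G"
    and subG: "\<forall>n\<ge>1. \<forall>a>0.
        measure (PiM {1..n} (\<lambda>_. distr G borel (\<lambda>x. x $ i)))
          {z \<in> space (PiM {1..n} (\<lambda>_. distr G borel (\<lambda>x. x $ i))).
             \<bar>(\<Sum>j=1..n. z j) / real n - \<mu> $ i\<bar> \<ge> a}
        \<le> 2 * exp (- c0 * a\<^sup>2 * real n)"
    and s: "s > 0"
  shows "measure M {\<omega>\<in>space M. real (q - p) * s \<le> (\<Sum>j\<in>{p<..q}. X j \<omega> $ i - \<mu> $ i)\<^sup>2}
     \<le> 2 * exp (- c0 * s)"
proof (rule iid_sum_tail[OF _ pq _ subG s])
  show "indep_vars (\<lambda>_. borel) (\<lambda>j \<omega>. X j \<omega> $ i) {p<..q}"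
    using indep_vars_compose2[OF indep, of "\<lambda>_ x. x $ i"] by simp
  fix j assume j: "j \<in> {p<..q}"
  then have "X j \<in> borel_measurable M" using indep unfolding indep_vars_def by auto
  then have "distr M borel ((\<lambda>x. x $ i) \<circ> X j) = distr (distr M borel (X j)) borel (\<lambda>x. x $ i)"
    by (intro distr_distr[symmetric]) auto
  then show "distr M borel (\<lambda>\<omega>. X j \<omega> $ i) = distr G borel (\<lambda>x. x $ i)"
    using distr_X j by (simp add: comp_def)
qed

lemma (in prob_space) iid_sum_norm_tail:
  fixes X :: "nat \<Rightarrow> 'a \<Rightarrow> real^'d" and G :: "(real^'d) measure"
  assumes indep: "indep_vars (\<lambda>_. borel) X {p<..q}" and pq: "p < q"
    and distr_X: "\<And>j. j \<in> {p<..q} \<Longrightarrow> distr M borel (X j) = G"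
    and subG: "\<forall>i. \<forall>n\<ge>1. \<forall>a>0.
        measure (PiM {1..n} (\<lambda>_. distr G borel (\<lambda>x. x $ i)))
          {z \<in> space (PiM {1..n} (\<lambda>_. distr G borel (\<lambda>x. x $ i))).
             \<bar>(\<Sum>j=1..n. z j) / real n - \<mu> $ i\<bar> \<ge> a}
        \<le> 2 * exp (- c0 * a\<^sup>2 * real n)"
    and t: "t > 0"
  shows "measure M {\<omega>\<in>space M. real (q - p) * t \<le> (norm (\<Sum>j\<in>{p<..q}. X j \<omega> - \<mu>))\<^sup>2}
     \<le> 2 * real CARD('d) * exp (- c0 * t / real CARD('d))"
proof -
  define s where "s = t / real CARD('d)"
  have s: "s > 0" using t by (simp add: s_def)
  have meas_X: "X j \<in> borel_measurable M" if "j \<in> {p<..q}" for j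
    using indep that unfolding indep_vars_def by auto
  define A where "A i = {\<omega>\<in>space M. real (q - p) * s \<le> (\<Sum>j\<in>{p<..q}. X j \<omega> $ i - \<mu> $ i)\<^sup>2}" for i
  have sets_A: "A i \<in> sets M" for i
  proof -
    have [measurable]: "(\<lambda>\<omega>. \<Sum>j\<in>{p<..q}. X j \<omega> $ i - \<mu> $ i) \<in> borel_measurable M"
      by (rule borel_measurable_sum) (use meas_X in measurable)
    show ?thesis unfolding A_def by measurable
  qed
  have "{\<omega>\<in>space M. real (q - p) * t \<le> (norm (\<Sum>j\<in>{p<..q}. X j \<omega> - \<mu>))\<^sup>2} \<subseteq> (\<Union>i. A i)"
  proof (rule subsetI, rule ccontr)
    fix \<omega> assume \<omega>: "\<omega> \<in> {\<omega>\<in>space M. real (q - p) * t \<le> (norm (\<Sum>j\<in>{p<..q}. X j \<omega> - \<mu>))\<^sup>2}"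
      and "\<omega> \<notin> (\<Union>i. A i)"
    then have "(\<Sum>j\<in>{p<..q}. X j \<omega> - \<mu>) $ i ^ 2 < real (q - p) * s" for i
      by (auto simp: A_def not_le)
    then have "(\<Sum>i\<in>UNIV. (\<Sum>j\<in>{p<..q}. X j \<omega> - \<mu>) $ i ^ 2) < (\<Sum>i\<in>(UNIV::'d set). real (q - p) * s)"
      by (intro sum_strict_mono) auto
    then have "(norm (\<Sum>j\<in>{p<..q}. X j \<omega> - \<mu>))\<^sup>2 < real (q - p) * t"
      by (simp add: norm_vec_def L2_set_def sum_nonneg s_def)
    then show False using \<omega> by simp
  qed
  then have "measure M {\<omega>\<in>space M. real (q - p) * t \<le> (norm (\<Sum>j\<in>{p<..q}. X j \<omega> - \<mu>))\<^sup>2}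
      \<le> measure M (\<Union>i. A i)"
    by (intro finite_measure_mono) (auto intro: sets_A)
  also have "\<dots> \<le> (\<Sum>i\<in>UNIV. measure M (A i))"
    by (rule finite_measure_subadditive_finite) (auto intro: sets_A)
  also have "\<dots> \<le> (\<Sum>i\<in>(UNIV::'d set). 2 * exp (- c0 * s))"
    unfolding A_def
    by (intro sum_mono iid_coordinate_sum_tail[OF indep pq distr_X _ s]) (use subG in auto)
  also have "\<dots> = 2 * real CARD('d) * exp (- c0 * t / real CARD('d))"
    by (simp add: s_def)
  finally show ?thesis .
qed

lemma sum_atLeastAtMost_split:
  fixes g :: "nat \<Rightarrow> 'b::comm_monoid_add"
  assumes "a \<le> b" "b \<le> c"
  shows "(\<Sum>j=a+1..c. g j) = (\<Sum>j=a+1..b. g j) + (\<Sum>j=b+1..c. g j)"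
proof -
  have "{a+1..c} = {a+1..b} \<union> {b+1..c}" using assms by auto
  then show ?thesis by (simp add: sum.union_disjoint[symmetric] ivl_disj_int)
qed

lemma loss_q_eq:
  fixes x :: "nat \<Rightarrow> real^'d"
  assumes "p \<le> r"
  shows "loss_q x p r = (\<Sum>n=p..r. (norm (x n))\<^sup>2) - (norm (\<Sum>n=p..r. x n))\<^sup>2 / real (r + 1 - p)"
proof -
  define S where "S = (\<Sum>n=p..r. x n)"
  define k where "k = real (r + 1 - p)"
  have k: "k > 0" using assms by (simp add: k_def)
  define m where "m = (1 / k) *\<^sub>R S"
  have "loss_q x p r = (\<Sum>n=p..r. (norm (x n))\<^sup>2 - 2 * inner (x n) m + (norm m)\<^sup>2)"
    unfolding loss_q_def seg_mean_def k_def[symmetric] S_def[symmetric] m_def[symmetric]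
    by (rule sum.cong) (auto simp: power2_norm_eq_inner inner_diff_left inner_diff_right inner_commute)
  also have "\<dots> = (\<Sum>n=p..r. (norm (x n))\<^sup>2) - 2 * inner S m + k * (norm m)\<^sup>2"
    by (simp add: sum.distrib sum_subtractf inner_sum_left S_def k_def sum_distrib_left[symmetric])
  also have "inner S m = (norm S)\<^sup>2 / k" by (simp add: m_def power2_norm_eq_inner)
  also have "k * (norm m)\<^sup>2 = (norm S)\<^sup>2 / k" using k
    by (simp add: m_def power2_eq_square field_simps)
  finally show ?thesis by (simp add: S_def k_def)
qed

lemma loss_q_merge:
  fixes x :: "nat \<Rightarrow> real^'d"
  assumes "a < b" "b < c"
  shows "loss_q x (a+1) c - loss_q x (a+1) b - loss_q x (b+1) c
    = (real (b-a) * real (c-b) / (real (b-a) + real (c-b))) *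
      (norm ((\<Sum>j=a+1..b. x j) /\<^sub>R real (b-a) - (\<Sum>j=b+1..c. x j) /\<^sub>R real (c-b)))\<^sup>2"
proof -
  define SA where "SA = (\<Sum>j=a+1..b. x j)"
  define SB where "SB = (\<Sum>j=b+1..c. x j)"
  define na where "na = real (b-a)"
  define nb where "nb = real (c-b)"
  have na: "na > 0" and nb: "nb > 0" using assms by (auto simp: na_def nb_def)
  have sizes: "real (c + 1 - (a+1)) = na + nb" "real (b + 1 - (a+1)) = na" "real (c + 1 - (b+1)) = nb"
    using assms by (auto simp: na_def nb_def)
  have "loss_q x (a+1) c - loss_q x (a+1) b - loss_q x (b+1) c
      = (norm SA)\<^sup>2 / na + (norm SB)\<^sup>2 / nb - (norm (SA + SB))\<^sup>2 / (na + nb)"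
    using assms loss_q_eq[of "a+1" c x, unfolded sizes] loss_q_eq[of "a+1" b x, unfolded sizes]
      loss_q_eq[of "b+1" c x, unfolded sizes]
      sum_atLeastAtMost_split[of a b c "\<lambda>j. (norm (x j))\<^sup>2"] sum_atLeastAtMost_split[of a b c x]
    by (simp only: SA_def SB_def)
  also have "\<dots> = na * nb / (na + nb) * (norm (SA /\<^sub>R na - SB /\<^sub>R nb))\<^sup>2"
    unfolding power2_norm_eq_inner using na nb
    by (simp add: inner_add_left inner_add_right inner_diff_left inner_diff_right inner_commute
        divide_simps)
       (simp add: algebra_simps power2_eq_square)
  finally show ?thesis by (simp add: SA_def SB_def na_def nb_def)
qed

lemma power2_norm_add4_le:
  fixes u1 u2 u3 u4 :: "'a::real_normed_vector"
  shows "(norm (u1 + u2 + u3 + u4))\<^sup>2 \<le> 4 * ((norm u1)\<^sup>2 + (norm u2)\<^sup>2 + (norm u3)\<^sup>2 + (norm u4)\<^sup>2)"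
proof -
  have "norm (u1 + u2 + u3 + u4) \<le> norm u1 + norm u2 + norm u3 + norm u4"
    by (intro norm_triangle_le add_mono order_refl)
  then have "(norm (u1 + u2 + u3 + u4))\<^sup>2 \<le> (norm u1 + norm u2 + norm u3 + norm u4)\<^sup>2"
    by (intro power_mono) auto
  also have "\<dots> \<le> 4 * ((norm u1)\<^sup>2 + (norm u2)\<^sup>2 + (norm u3)\<^sup>2 + (norm u4)\<^sup>2)"
    using sum_squares_ge_zero[of "norm u1 - norm u2" "norm u3 - norm u4"]
      sum_squares_ge_zero[of "norm u1 - norm u3" "norm u2 - norm u4"]
      sum_squares_ge_zero[of "norm u1 - norm u4" "norm u2 - norm u3"]
    by (simp add: power2_eq_square algebra_simps)
  finally show ?thesis .
qed

lemma mult_power2_norm_scaleR_less: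
  fixes U :: "'a::real_normed_vector"
  assumes "h > 0" "h \<le> A" "(norm U)\<^sup>2 < A * t"
  shows "h * (norm (U /\<^sub>R A))\<^sup>2 < t"
proof -
  have A: "A > 0" using assms by simp
  have "h * (norm (U /\<^sub>R A))\<^sup>2 = h * (norm U)\<^sup>2 / A\<^sup>2"
    using A by (simp add: power_mult_distrib field_simps)
  also have "\<dots> \<le> A * (norm U)\<^sup>2 / A\<^sup>2" using assms
    by (intro divide_right_mono mult_right_mono) auto
  also have "\<dots> = (norm U)\<^sup>2 / A" using A by (simp add: power2_eq_square)
  also have "\<dots> < t" using assms A by (simp add: divide_simps mult.commute)
  finally show ?thesis .
qed

text \<open>Besides the three fluctuations, the spilled block SB2
  shifts the mean of the merged second block by (n3 / (b1 + n3)) (\<mu> - \<nu>); this is where the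
  hypothesis on n3 |\<mu> - \<nu>|^2 enters.\<close>
lemma contaminated_mean_gap_bound:
  fixes SA SB1 SB2 \<mu> \<nu> :: "'a::real_inner" and na b1 n3 t :: real
  assumes pos: "na > 0" "b1 > 0" "n3 > 0"
    and dev: "(norm (SA - na *\<^sub>R \<mu>))\<^sup>2 < na * t" "(norm (SB1 - b1 *\<^sub>R \<mu>))\<^sup>2 < b1 * t"
      "(norm (SB2 - n3 *\<^sub>R \<nu>))\<^sup>2 < n3 * t"
    and gap: "n3 * (norm (\<mu> - \<nu>))\<^sup>2 \<le> t"
  shows "na * (b1 + n3) / (na + (b1 + n3)) * (norm (SA /\<^sub>R na - (SB1 + SB2) /\<^sub>R (b1 + n3)))\<^sup>2
    < 16 * t"
proof -
  define nb where "nb = b1 + n3"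
  define h where "h = na * nb / (na + nb)"
  have nb: "nb > 0" using pos by (simp add: nb_def)
  have h: "h > 0" "h \<le> na" "h \<le> nb" using pos nb by (auto simp: h_def divide_simps)
  have t: "t \<ge> 0" using gap pos by (smt (verit) zero_le_mult_iff zero_le_power2)
  define W where "W = (n3 / nb) *\<^sub>R (\<mu> - \<nu>)"
  have decomp: "SA /\<^sub>R na - (SB1 + SB2) /\<^sub>R nb = (SA - na *\<^sub>R \<mu>) /\<^sub>R na
      + (- (SB1 - b1 *\<^sub>R \<mu>)) /\<^sub>R nb + (- (SB2 - n3 *\<^sub>R \<nu>)) /\<^sub>R nb + W"
  proof -
    have "(b1 / nb) *\<^sub>R \<mu> + (n3 / nb) *\<^sub>R \<mu> = \<mu>"
      using pos by (simp add: nb_def add_divide_distrib[symmetric] flip: scaleR_add_left)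
    then show ?thesis
      using pos by (simp add: W_def algebra_simps scaleR_diff_right divide_inverse_commute)
  qed
  have W: "h * (norm W)\<^sup>2 \<le> t"
  proof -
    have "h * (norm W)\<^sup>2 = h * (n3 / nb)\<^sup>2 * (norm (\<mu> - \<nu>))\<^sup>2"
      using pos nb by (simp add: W_def power_mult_distrib power_divide)
    also have "\<dots> \<le> nb * (n3 / nb)\<^sup>2 * (norm (\<mu> - \<nu>))\<^sup>2"
      using h by (intro mult_right_mono) auto
    also have "\<dots> = (n3 / nb) * (n3 * (norm (\<mu> - \<nu>))\<^sup>2)"
      using nb by (simp add: power2_eq_square)
    also have "\<dots> \<le> 1 * t"
      using pos nb gap by (intro mult_mono) (auto simp: nb_def)
    finally show ?thesis by simp
  qed
  have small: "(norm (- (SB1 - b1 *\<^sub>R \<mu>)))\<^sup>2 < nb * t" "(norm (- (SB2 - n3 *\<^sub>R \<nu>)))\<^sup>2 < nb * t"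
    unfolding norm_minus_cancel
    using dev pos t mult_right_mono[of b1 nb t] mult_right_mono[of n3 nb t]
    by (simp_all add: nb_def)
  define u1 where "u1 = (SA - na *\<^sub>R \<mu>) /\<^sub>R na"
  define u2 where "u2 = (- (SB1 - b1 *\<^sub>R \<mu>)) /\<^sub>R nb"
  define u3 where "u3 = (- (SB2 - n3 *\<^sub>R \<nu>)) /\<^sub>R nb"
  have "h * (norm (SA /\<^sub>R na - (SB1 + SB2) /\<^sub>R nb))\<^sup>2 = h * (norm (u1 + u2 + u3 + W))\<^sup>2"
    by (simp only: decomp u1_def u2_def u3_def)
  also have "\<dots> \<le> h * (4 * ((norm u1)\<^sup>2 + (norm u2)\<^sup>2 + (norm u3)\<^sup>2 + (norm W)\<^sup>2))"
    using h by (intro mult_left_mono power2_norm_add4_le) auto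
  also have "\<dots> = 4 * (h * (norm u1)\<^sup>2 + h * (norm u2)\<^sup>2 + h * (norm u3)\<^sup>2 + h * (norm W)\<^sup>2)"
    by (simp add: algebra_simps)
  also have "\<dots> < 4 * (t + t + t + t)"
    using mult_power2_norm_scaleR_less[OF h(1,2) dev(1)]
      mult_power2_norm_scaleR_less[OF h(1,3) small(1)]
      mult_power2_norm_scaleR_less[OF h(1,3) small(2)] W
    unfolding u1_def u2_def u3_def by simp
  finally show ?thesis by (simp add: h_def nb_def)
qed

definition concentrated :: "(nat \<Rightarrow> real^'d) \<Rightarrow> real^'d \<Rightarrow> real \<Rightarrow> nat \<Rightarrow> nat \<Rightarrow> bool" where
  "concentrated x \<mu> t p q \<longleftrightarrow> (norm ((\<Sum>j=p+1..q. x j) - real (q - p) *\<^sub>R \<mu>))\<^sup>2 < real (q - p) * t"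

lemma concentrated_mono: "concentrated x \<mu> s p q \<Longrightarrow> s \<le> t \<Longrightarrow> concentrated x \<mu> t p q"
  unfolding concentrated_def by (smt (verit) mult_left_mono of_nat_0_le_iff)

lemma merge_gain_less_contaminated_right:
  fixes x :: "nat \<Rightarrow> real^'d"
  assumes "a < b" "b < e" "e < c"
    and "concentrated x \<mu> t a b" "concentrated x \<mu> t b e" "concentrated x \<nu> t e c"
    and "real (c - e) * (norm (\<mu> - \<nu>))\<^sup>2 \<le> t"
  shows "loss_q x (a+1) c - loss_q x (a+1) b - loss_q x (b+1) c < 16 * t"
proof -
  have sizes: "real (c - b) = real (e - b) + real (c - e)" using assms by simp
  have sums: "(\<Sum>j=b+1..c. x j) = (\<Sum>j=b+1..e. x j) + (\<Sum>j=e+1..c. x j)"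
    using assms by (intro sum_atLeastAtMost_split) auto
  show ?thesis
    unfolding loss_q_merge[OF assms(1) order.strict_trans[OF assms(2,3)]] sizes sums
    by (rule contaminated_mean_gap_bound) (use assms in \<open>auto simp: concentrated_def\<close>)
qed

lemma merge_gain_less_contaminated_left:
  fixes x :: "nat \<Rightarrow> real^'d"
  assumes "a < e" "e < b" "b < c"
    and "concentrated x \<nu> t a e" "concentrated x \<mu> t e b" "concentrated x \<mu> t b c"
    and "real (e - a) * (norm (\<mu> - \<nu>))\<^sup>2 \<le> t"
  shows "loss_q x (a+1) c - loss_q x (a+1) b - loss_q x (b+1) c < 16 * t"
proof -
  have sizes: "real (b - a) = real (b - e) + real (e - a)" using assms by simp
  have sums: "(\<Sum>j=a+1..b. x j) = (\<Sum>j=e+1..b. x j) + (\<Sum>j=a+1..e. x j)"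
    using assms sum_atLeastAtMost_split[of a e b x] by (simp add: add.commute)
  have "loss_q x (a+1) c - loss_q x (a+1) b - loss_q x (b+1) c
      = real (c - b) * real (b - a) / (real (c - b) + real (b - a))
        * (norm ((\<Sum>j=b+1..c. x j) /\<^sub>R real (c - b) - (\<Sum>j=a+1..b. x j) /\<^sub>R real (b - a)))\<^sup>2"
    unfolding loss_q_merge[OF order.strict_trans[OF assms(1,2)] assms(3)]
    by (simp add: norm_minus_commute add.commute mult.commute)
  also have "\<dots> < 16 * t"
    unfolding sizes sums
    by (rule contaminated_mean_gap_bound) (use assms in \<open>auto simp: concentrated_def\<close>)
  finally show ?thesis .
qed

lemma valid_part_less:
  assumes "valid_part N k l" "i < i'" "i' \<le> k + 1"
  shows "l i < l i'"
  using assms(2,3)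
proof (induction i')
  case (Suc i')
  have "l i' < l (Suc i')" using assms(1) Suc.prems unfolding valid_part_def by auto
  then show ?case using Suc by (cases "i = i'") auto
qed simp

lemma sum_atLeastAtMost_split_at:
  fixes g :: "nat \<Rightarrow> 'b::comm_monoid_add"
  assumes "1 \<le> j" "j \<le> m"
  shows "(\<Sum>i=1..m. g i) = (\<Sum>i\<in>{1..<j}. g i) + g j + (\<Sum>i=j+1..m. g i)"
proof -
  have split: "{1..m} = {1..<j} \<union> ({j} \<union> {j+1..m})" using assms by auto
  show ?thesis unfolding split
    by (subst sum.union_disjoint, simp, simp, force)+ (simp add: add.assoc)
qed

lemma valid_part_remove:
  assumes v: "valid_part N m l" and j: "1 \<le> j" "j \<le> m"
  shows "valid_part N (m - 1) (\<lambda>i. l (if i < j then i else Suc i))"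
  unfolding valid_part_def
proof (intro conjI allI impI)
  fix i assume "i \<le> m - 1"
  then show "l (if i < j then i else Suc i) < l (if Suc i < j then Suc i else Suc (Suc i))"
    using j by (intro valid_part_less[OF v]) auto
qed (use v j in \<open>auto simp: valid_part_def\<close>)

lemma seg_cost_remove:
  assumes j: "1 \<le> j" "j \<le> m"
  shows "seg_cost x (m - 1) (\<lambda>i. l (if i < j then i else Suc i)) = seg_cost x m l
    - loss_q x (l (j - 1) + 1) (l j) - loss_q x (l j + 1) (l (j + 1))
    + loss_q x (l (j - 1) + 1) (l (j + 1))"
proof -
  define l' where "l' i = l (if i < j then i else Suc i)" for i
  define F where "F i = loss_q x (l (i - 1) + 1) (l i)" for i
  define F' where "F' i = loss_q x (l' (i - 1) + 1) (l' i)" for i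
  have "seg_cost x m l = (\<Sum>i\<in>{1..<j}. F i) + F j + (\<Sum>i=j+1..m+1. F i)"
    unfolding seg_cost_def F_def[symmetric] using j by (intro sum_atLeastAtMost_split_at) auto
  also have "(\<Sum>i=j+1..m+1. F i) = F (j + 1) + (\<Sum>i=j+2..m+1. F i)"
    using j by (subst sum.atLeast_Suc_atMost) auto
  finally have cost: "seg_cost x m l = (\<Sum>i\<in>{1..<j}. F i) + F j + F (j + 1) + (\<Sum>i=j+2..m+1. F i)"
    by (simp add: add.assoc)
  have "seg_cost x (m - 1) l' = (\<Sum>i\<in>{1..<j}. F' i) + F' j + (\<Sum>i=j+1..m. F' i)"
    unfolding seg_cost_def F'_def[symmetric] using j le_add_diff_inverse2[of 1 m]
    by (simp only:) (rule sum_atLeastAtMost_split_at[OF j])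
  also have "(\<Sum>i\<in>{1..<j}. F' i) = (\<Sum>i\<in>{1..<j}. F i)"
    by (rule sum.cong) (auto simp: F_def F'_def l'_def)
  also have "(\<Sum>i=j+1..m. F' i) = (\<Sum>i=j+1..m. F (i + 1))"
    by (rule sum.cong) (auto simp: F_def F'_def l'_def)
  also have "\<dots> = (\<Sum>i=j+2..m+1. F i)"
    by (rule sum.reindex_bij_witness[of _ "\<lambda>i. i - 1" "\<lambda>i. i + 1"]) auto
  finally show ?thesis
    using j unfolding l'_def[symmetric] cost by (simp add: F_def F'_def l'_def)
qed

lemma stop_index_less:
  assumes "N \<ge> 1"
  shows "stop_index sel Mmax beta N x < N"
proof (cases "\<exists>k\<le>Mmax. stop_bad sel beta N x k")
  case True
  define k0 where "k0 = (LEAST k. k \<le> Mmax \<and> stop_bad sel beta N x k)"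
  have "k0 \<le> N"
  proof (cases "N \<le> Mmax")
    case True
    then show ?thesis unfolding k0_def by (intro Least_le) (simp add: stop_bad_def)
  next
    case False
    have "k0 \<le> Mmax" unfolding k0_def by (rule LeastI2_ex[OF True]) auto
    then show ?thesis using False by simp
  qed
  then show ?thesis using True assms by (simp add: stop_index_def k0_def[symmetric])
next
  case False
  then show ?thesis by (auto simp: stop_index_def stop_bad_def)
qed

text \<open>Two neighbouring output segments of Algorithm 2 cannot be merged profitably: merging
  them gives a segmentation with one change point fewer, whose penalized criterion is at
  least that of the output.\<close>
lemma detected_merge_gain_ge:
  fixes x :: "nat \<Rightarrow> real^'d"
  assumes sel_min: "\<forall>N x k. k < N \<longrightarrow> is_minimizer N x k (sel N x k)"
    and pick_le: "\<forall>N x. pick N x \<le> stop_index sel Mmax beta N x"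
    and pick_min: "\<forall>N x. \<forall>k\<le>stop_index sel Mmax beta N x.
                      pen_crit sel f N x (pick N x) \<le> pen_crit sel f N x k"
    and N: "N \<ge> 1"
    and detected: "two_detected (sel N x (pick N x)) (pick N x) a b c"
  shows "a < b" "b < c" "f N \<le> loss_q x (a+1) c - loss_q x (a+1) b - loss_q x (b+1) c"
proof -
  define m where "m = pick N x"
  define l where "l = sel N x m"
  have m: "m \<le> stop_index sel Mmax beta N x" unfolding m_def using pick_le by blast
  then have "m < N" using stop_index_less[OF N] by (meson le_less_trans)
  then have v: "valid_part N m l"
    using sel_min unfolding l_def is_minimizer_def by blast
  obtain j where j: "1 \<le> j" "j \<le> m" and abc: "l (j - 1) = a" "l j = b" "l (j + 1) = c"
    using detected unfolding two_detected_def m_def[symmetric] l_def[symmetric] by blast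
  show "a < b" "b < c" using valid_part_less[OF v, of "j - 1" j] valid_part_less[OF v, of j "j + 1"] j abc
    by auto
  define l' where "l' i = l (if i < j then i else Suc i)" for i
  have "seg_cost x (m - 1) (sel N x (m - 1)) \<le> seg_cost x (m - 1) l'"
    using sel_min valid_part_remove[OF v j] \<open>m < N\<close> unfolding is_minimizer_def l'_def
    by (meson diff_le_self le_less_trans)
  moreover have "seg_cost x m l + real (m - 1) * f N + f N
      \<le> seg_cost x (m - 1) (sel N x (m - 1)) + real (m - 1) * f N"
  proof -
    have "pen_crit sel f N x m \<le> pen_crit sel f N x (m - 1)"
      using pick_min m unfolding m_def by simp
    moreover have "real m = real (m - 1) + 1" using j by simp
    ultimately show ?thesis unfolding pen_crit_def l_def by (simp only: distrib_right mult_1_left)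
  qed
  moreover have "seg_cost x (m - 1) l' = seg_cost x m l
      - loss_q x (a + 1) b - loss_q x (b + 1) c + loss_q x (a + 1) c"
    using seg_cost_remove[OF j, of x l] unfolding l'_def abc .
  ultimately show "f N \<le> loss_q x (a+1) c - loss_q x (a+1) b - loss_q x (b+1) c"
    by linarith
qed

lemma power2_Suc_mult_exp_neg_ln_le:
  assumes N: "N \<ge> 1" and e: "e \<ge> 4"
  shows "(real N + 1)\<^sup>2 * exp (- (e * ln (real N))) \<le> 4 / real N ^ 2"
proof -
  have N1: "real N \<ge> 1" using N by simp
  have "exp (- (e * ln (real N))) = real N powr (- e)"
    using N by (simp add: powr_def)
  also have "\<dots> \<le> real N powr (- 4)" using N1 e by (intro powr_mono) auto
  also have "\<dots> = 1 / real N ^ 4" using N by (simp add: powr_minus powr_realpow divide_inverse)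
  finally have "(real N + 1)\<^sup>2 * exp (- (e * ln (real N))) \<le> (2 * real N)\<^sup>2 * (1 / real N ^ 4)"
    using N1 by (intro mult_mono power_mono) auto
  also have "\<dots> = 4 / real N ^ 2" using N by (simp add: field_simps power2_eq_square power4_eq_xxxx)
  finally show ?thesis .
qed

locale change_point_model = prob_space M
  for M :: "'a measure"
    and X :: "nat \<Rightarrow> nat \<Rightarrow> 'a \<Rightarrow> real^'d"
    and N0 M0 :: nat
    and L :: "nat \<Rightarrow> nat \<Rightarrow> nat"
    and G :: "nat \<Rightarrow> (real^'d) measure"
    and \<mu> :: "nat \<Rightarrow> real^'d"
    and c0 :: real +
  assumes L0: "\<forall>N\<ge>N0. L N 0 = 0"
    and Lend: "\<forall>N\<ge>N0. L N (M0 + 1) = N"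
    and Lmono: "\<forall>N\<ge>N0. \<forall>k\<le>M0. L N k < L N (Suc k)"
    and indep: "\<forall>N\<ge>N0. indep_vars (\<lambda>_. borel) (X N) {1..N}"
    and distr_X: "\<forall>N\<ge>N0. \<forall>k\<in>{1..M0+1}. \<forall>n\<in>{L N (k - 1) + 1 .. L N k}.
                    distr M borel (X N n) = G k"
    and c0_pos: "c0 > 0"
    and subG: "\<forall>k\<in>{1..M0+1}. \<forall>i. \<forall>n\<ge>1. \<forall>a>0.
        measure (PiM {1..n} (\<lambda>_. distr (G k) borel (\<lambda>x. x $ i)))
          {z \<in> space (PiM {1..n} (\<lambda>_. distr (G k) borel (\<lambda>x. x $ i))).
             \<bar>(\<Sum>j=1..n. z j) / real n - \<mu> k $ i\<bar> \<ge> a}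
        \<le> 2 * exp (- c0 * a\<^sup>2 * real n)"
begin

lemma L_le: "N \<ge> N0 \<Longrightarrow> i \<le> M0 + 1 \<Longrightarrow> L N i \<le> N"
  using valid_part_less[of N M0 "L N" i "M0 + 1"] L0 Lend Lmono
  by (cases "i = M0 + 1") (auto simp: valid_part_def)

definition blocks :: "nat \<Rightarrow> (nat \<times> nat \<times> nat) set" where
  "blocks N = {(k, p, q). k \<in> {1..M0+1} \<and> L N (k - 1) \<le> p \<and> p < q \<and> q \<le> L N k}"

definition block_deviation :: "nat \<Rightarrow> real \<Rightarrow> nat \<times> nat \<times> nat \<Rightarrow> 'a set" where
  "block_deviation N t = (\<lambda>(k, p, q).
     {\<omega>\<in>space M. real (q - p) * t \<le> (norm (\<Sum>j\<in>{p<..q}. X N j \<omega> - \<mu> k))\<^sup>2})"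

definition deviation_event :: "nat \<Rightarrow> real \<Rightarrow> 'a set" where
  "deviation_event N t = (\<Union>b\<in>blocks N. block_deviation N t b)"

lemma blocks_subset: "N \<ge> N0 \<Longrightarrow> blocks N \<subseteq> {1..M0+1} \<times> {..N} \<times> {..N}"
  using L_le by (fastforce simp: blocks_def)

lemma finite_blocks: "N \<ge> N0 \<Longrightarrow> finite (blocks N)"
  using blocks_subset by (rule finite_subset) auto

lemma block_sum_measurable:
  assumes "N \<ge> N0" "(k, p, q) \<in> blocks N"
  shows "(\<lambda>\<omega>. \<Sum>j\<in>{p<..q}. X N j \<omega> - \<mu> k) \<in> borel_measurable M"
proof -
  have "X N j \<in> borel_measurable M" if "j \<in> {p<..q}" for j
    using indep assms blocks_subset[OF assms(1)] that unfolding indep_vars_def by force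
  then show ?thesis by (intro borel_measurable_sum borel_measurable_diff) auto
qed

lemma block_deviation_sets:
  assumes "N \<ge> N0" "b \<in> blocks N"
  shows "block_deviation N t b \<in> sets M"
proof -
  obtain k p q where b: "b = (k, p, q)" by (cases b) auto
  have [measurable]: "(\<lambda>\<omega>. \<Sum>j\<in>{p<..q}. X N j \<omega> - \<mu> k) \<in> borel_measurable M"
    using block_sum_measurable assms by (simp add: b)
  show ?thesis unfolding b block_deviation_def prod.case by measurable
qed

lemma deviation_event_sets: "N \<ge> N0 \<Longrightarrow> deviation_event N t \<in> sets M"
  unfolding deviation_event_def
  by (intro sets.finite_UN finite_blocks block_deviation_sets)

lemma measure_block_deviation_le:
  assumes N: "N \<ge> N0" and block: "(k, p, q) \<in> blocks N" and t: "t > 0"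
  shows "measure M (block_deviation N t (k, p, q))
    \<le> 2 * real CARD('d) * exp (- c0 * t / real CARD('d))"
  unfolding block_deviation_def prod.case
proof (rule iid_sum_norm_tail[OF _ _ _ _ t])
  have "{p<..q} \<subseteq> {1..N}" using block blocks_subset[OF N] by auto
  then show "indep_vars (\<lambda>_. borel) (X N) {p<..q}" using indep N by (blast intro: indep_vars_subset)
  show "p < q" using block by (simp add: blocks_def)
  show "distr M borel (X N j) = G k" if "j \<in> {p<..q}" for j
    using distr_X N block that by (auto simp: blocks_def)
  show "\<forall>i. \<forall>n\<ge>1. \<forall>a>0.
        measure (PiM {1..n} (\<lambda>_. distr (G k) borel (\<lambda>x. x $ i)))
          {z \<in> space (PiM {1..n} (\<lambda>_. distr (G k) borel (\<lambda>x. x $ i))).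
             \<bar>(\<Sum>j=1..n. z j) / real n - \<mu> k $ i\<bar> \<ge> a}
        \<le> 2 * exp (- c0 * a\<^sup>2 * real n)"
    using subG block by (simp add: blocks_def)
qed

lemma measure_deviation_event_le:
  assumes N: "N \<ge> N0" and t: "t > 0"
  shows "measure M (deviation_event N t)
    \<le> real (M0 + 1) * (real N + 1)\<^sup>2 * (2 * real CARD('d) * exp (- c0 * t / real CARD('d)))"
proof -
  have "measure M (deviation_event N t) \<le> (\<Sum>b\<in>blocks N. measure M (block_deviation N t b))"
    unfolding deviation_event_def
    by (rule finite_measure_subadditive_finite[OF finite_blocks[OF N]])
       (auto intro: block_deviation_sets[OF N])
  also have "\<dots> \<le> real (card (blocks N)) * (2 * real CARD('d) * exp (- c0 * t / real CARD('d)))"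
    by (rule sum_bounded_above) (use measure_block_deviation_le[OF N _ t] in force)
  also have "card (blocks N) \<le> card ({1..M0+1} \<times> {..N} \<times> {..N})"
    using card_mono[OF _ blocks_subset[OF N]] by simp
  also have "real \<dots> = real (M0 + 1) * (real N + 1)\<^sup>2"
    by (simp add: card_cartesian_product power2_eq_square algebra_simps)
  finally show ?thesis by (simp add: mult_right_mono)
qed

text \<open>With t = C ln N / 16 a single block deviates with probability at most
  2 D N^(-c0 C / (16 D)), and c0 C > 64 D makes the union over the O(N^2) blocks O(N^-2).\<close>
lemma measure_deviation_event_log_le:
  assumes C: "C > 64 * real CARD('d) / c0" and N: "N \<ge> max N0 2"
  shows "measure M (deviation_event N (C * ln (real N) / 16))
    \<le> 8 * real (M0 + 1) * real CARD('d) * inverse (real N ^ 2)"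
proof -
  define D where "D = real CARD('d)"
  have D: "D > 0" by (simp add: D_def)
  define e where "e = c0 * C / (16 * D)"
  have c0C: "64 * D < c0 * C"
    using C c0_pos by (simp add: D_def pos_divide_less_eq mult.commute)
  then have e: "e \<ge> 4" using D by (simp add: e_def pos_le_divide_eq)
  have "C > 0" using c0C c0_pos D zero_less_mult_pos[of c0 C] by simp
  then have t: "C * ln (real N) / 16 > 0" using N by simp
  have "- c0 * (C * ln (real N) / 16) / D = - (e * ln (real N))"
    using D by (simp add: e_def field_simps)
  then have "measure M (deviation_event N (C * ln (real N) / 16))
      \<le> real (M0 + 1) * (2 * D) * ((real N + 1)\<^sup>2 * exp (- (e * ln (real N))))"
    using N measure_deviation_event_le[of N, OF _ t] by (simp add: D_def algebra_simps)
  also have "\<dots> \<le> real (M0 + 1) * (2 * D) * (4 / real N ^ 2)"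
    using N e D by (intro mult_left_mono power2_Suc_mult_exp_neg_ln_le) auto
  also have "\<dots> = 8 * real (M0 + 1) * D * inverse (real N ^ 2)"
    by (simp only: divide_inverse mult_ac)
  finally show ?thesis by (simp only: D_def)
qed

lemma AE_eventually_blocks_concentrated:
  assumes C: "C > 64 * real CARD('d) / c0"
  shows "AE \<omega> in M. \<forall>\<^sub>F N in sequentially. \<forall>(k, p, q)\<in>blocks N.
    concentrated (\<lambda>n. X N n \<omega>) (\<mu> k) (C * ln (real N) / 16) p q"
proof -
  define bad where "bad N = (if max N0 2 \<le> N then deviation_event N (C * ln (real N) / 16) else {})"
    for N
  define K where "K = 8 * real (M0 + 1) * real CARD('d)"
  have sets_bad: "bad N \<in> sets M" for N
    by (simp add: bad_def deviation_event_sets)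
  have measure_bad: "measure M (bad N) \<le> K * inverse (real N ^ 2)" for N
  proof (cases "max N0 2 \<le> N")
    case True
    then have "bad N = deviation_event N (C * ln (real N) / 16)" unfolding bad_def by (rule if_P)
    then show ?thesis using measure_deviation_event_log_le[OF C True] by (simp only: K_def)
  next
    case False
    then have "bad N = {}" unfolding bad_def by (simp only: if_False)
    then show ?thesis by (simp add: K_def)
  qed
  have "summable (\<lambda>N. measure M (bad N))"
    by (rule summable_comparison_test'[where N=0, OF summable_mult[OF inverse_power_summable]])
       (use measure_bad in auto)
  then have "AE \<omega> in M. \<forall>\<^sub>F N in sequentially. \<omega> \<in> space M - bad N"
    by (intro borel_cantelli_AE1 sets_bad) (simp_all add: emeasure_eq_measure)
  then show ?thesis
  proof (rule eventually_mono)
    fix \<omega> assume "\<forall>\<^sub>F N in sequentially. \<omega> \<in> space M - bad N"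
    with eventually_ge_at_top[of "max N0 2"]
    show "\<forall>\<^sub>F N in sequentially. \<forall>(k, p, q)\<in>blocks N.
      concentrated (\<lambda>n. X N n \<omega>) (\<mu> k) (C * ln (real N) / 16) p q"
    proof eventually_elim
      case (elim N)
      show ?case
      proof (intro ballI, clarify)
        fix k p q assume b: "(k, p, q) \<in> blocks N"
        then have "\<omega> \<notin> block_deviation N (C * ln (real N) / 16) (k, p, q)"
          using elim by (auto simp: bad_def deviation_event_def)
        moreover have "(\<Sum>j\<in>{p<..q}. X N j \<omega> - \<mu> k)
            = (\<Sum>j=p+1..q. X N j \<omega>) - real (q - p) *\<^sub>R \<mu> k"
          by (simp add: sum_subtractf atLeastSucAtMost_greaterThanAtMost scaleR_conv_of_real)
        ultimately show "concentrated (\<lambda>n. X N n \<omega>) (\<mu> k) (C * ln (real N) / 16) p q"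
          using elim by (simp add: block_deviation_def concentrated_def not_le)
      qed
    qed
  qed
qed

lemma no_detected_pair_across_right:
  fixes x :: "nat \<Rightarrow> real^'d"
  assumes sel_min: "\<forall>N x k. k < N \<longrightarrow> is_minimizer N x k (sel N x k)"
    and pick_le: "\<forall>N x. pick N x \<le> stop_index sel Mmax beta N x"
    and pick_min: "\<forall>N x. \<forall>k\<le>stop_index sel Mmax beta N x.
                      pen_crit sel f N x (pick N x) \<le> pen_crit sel f N x k"
    and N: "N \<ge> N0" "N \<ge> 1" and k: "k \<in> {1..M0}" and \<eta>: "\<eta> \<le> L N (k + 1) - L N k"
    and gap: "16 * (norm (\<mu> k - \<mu> (k + 1)))\<^sup>2 * real \<eta> \<le> f N"
    and conc: "\<forall>(k', p, q)\<in>blocks N. concentrated x (\<mu> k') (f N / 16) p q"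
  shows "\<not> (\<exists>n1 n2 n3. n1 < n2 \<and> n2 < L N k - L N (k - 1) \<and> 1 \<le> n3 \<and> n3 \<le> \<eta> \<and>
    two_detected (sel N x (pick N x)) (pick N x) (L N (k - 1) + n1) (L N (k - 1) + n2) (L N k + n3))"
proof (intro notI, elim exE conjE)
  fix n1 n2 n3
  assume n: "n1 < n2" "n2 < L N k - L N (k - 1)" "1 \<le> n3" "n3 \<le> \<eta>"
    and detected: "two_detected (sel N x (pick N x)) (pick N x)
      (L N (k - 1) + n1) (L N (k - 1) + n2) (L N k + n3)"
  define t where "t = f N / 16"
  have block: "concentrated x (\<mu> k') t p q" if "(k', p, q) \<in> blocks N" for k' p q
    using conc that by (auto simp: t_def)
  have gain: "f N \<le> loss_q x (L N (k - 1) + n1 + 1) (L N k + n3)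
      - loss_q x (L N (k - 1) + n1 + 1) (L N (k - 1) + n2)
      - loss_q x (L N (k - 1) + n2 + 1) (L N k + n3)"
    using detected_merge_gain_ge(3)[OF sel_min pick_le pick_min N(2) detected] by simp
  have "real n3 * (norm (\<mu> k - \<mu> (k + 1)))\<^sup>2 \<le> real \<eta> * (norm (\<mu> k - \<mu> (k + 1)))\<^sup>2"
    using n by (intro mult_right_mono) auto
  then have "real (L N k + n3 - L N k) * (norm (\<mu> k - \<mu> (k + 1)))\<^sup>2 \<le> t"
    using gap by (simp add: t_def algebra_simps)
  moreover have "concentrated x (\<mu> k) t (L N (k - 1) + n1) (L N (k - 1) + n2)"
    "concentrated x (\<mu> k) t (L N (k - 1) + n2) (L N k)"
    "concentrated x (\<mu> (k + 1)) t (L N k) (L N k + n3)"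
    using n \<eta> k by (auto simp: blocks_def intro!: block)
  ultimately have "loss_q x (L N (k - 1) + n1 + 1) (L N k + n3)
      - loss_q x (L N (k - 1) + n1 + 1) (L N (k - 1) + n2)
      - loss_q x (L N (k - 1) + n2 + 1) (L N k + n3) < 16 * t"
    using n by (intro merge_gain_less_contaminated_right) auto
  then show False using gain by (simp add: t_def)
qed

lemma no_detected_pair_across_left:
  fixes x :: "nat \<Rightarrow> real^'d"
  assumes sel_min: "\<forall>N x k. k < N \<longrightarrow> is_minimizer N x k (sel N x k)"
    and pick_le: "\<forall>N x. pick N x \<le> stop_index sel Mmax beta N x"
    and pick_min: "\<forall>N x. \<forall>k\<le>stop_index sel Mmax beta N x.
                      pen_crit sel f N x (pick N x) \<le> pen_crit sel f N x k"
    and N: "N \<ge> N0" "N \<ge> 1" and k: "k \<in> {2..M0+1}" and \<eta>: "\<eta> \<le> L N (k - 1) - L N (k - 2)"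
    and gap: "16 * (norm (\<mu> (k - 1) - \<mu> k))\<^sup>2 * real \<eta> \<le> f N"
    and conc: "\<forall>(k', p, q)\<in>blocks N. concentrated x (\<mu> k') (f N / 16) p q"
  shows "\<not> (\<exists>n1 n2 n3. 1 \<le> n1 \<and> n1 < n2 \<and> n2 \<le> L N k - L N (k - 1) \<and> 1 \<le> n3 \<and> n3 \<le> \<eta> \<and>
    two_detected (sel N x (pick N x)) (pick N x) (L N (k - 1) - n3) (L N (k - 1) + n1) (L N (k - 1) + n2))"
proof (intro notI, elim exE conjE)
  fix n1 n2 n3
  assume n: "1 \<le> n1" "n1 < n2" "n2 \<le> L N k - L N (k - 1)" "1 \<le> n3" "n3 \<le> \<eta>"
    and detected: "two_detected (sel N x (pick N x)) (pick N x)
      (L N (k - 1) - n3) (L N (k - 1) + n1) (L N (k - 1) + n2)"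
  define t where "t = f N / 16"
  have block: "concentrated x (\<mu> k') t p q" if "(k', p, q) \<in> blocks N" for k' p q
    using conc that by (auto simp: t_def)
  have n3: "n3 \<le> L N (k - 1) - L N (k - 2)" using n \<eta> by linarith
  have gain: "f N \<le> loss_q x (L N (k - 1) - n3 + 1) (L N (k - 1) + n2)
      - loss_q x (L N (k - 1) - n3 + 1) (L N (k - 1) + n1)
      - loss_q x (L N (k - 1) + n1 + 1) (L N (k - 1) + n2)"
    using detected_merge_gain_ge(3)[OF sel_min pick_le pick_min N(2) detected] by simp
  have "real n3 * (norm (\<mu> k - \<mu> (k - 1)))\<^sup>2 \<le> real \<eta> * (norm (\<mu> k - \<mu> (k - 1)))\<^sup>2"
    using n by (intro mult_right_mono) auto
  then have "real (L N (k - 1) - (L N (k - 1) - n3)) * (norm (\<mu> k - \<mu> (k - 1)))\<^sup>2 \<le> t"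
    using gap n n3 by (simp add: t_def algebra_simps norm_minus_commute)
  moreover have "concentrated x (\<mu> (k - 1)) t (L N (k - 1) - n3) (L N (k - 1))"
    "concentrated x (\<mu> k) t (L N (k - 1)) (L N (k - 1) + n1)"
    "concentrated x (\<mu> k) t (L N (k - 1) + n1) (L N (k - 1) + n2)"
    using n n3 k by (auto simp: blocks_def numeral_2_eq_2 intro!: block)
  ultimately have "loss_q x (L N (k - 1) - n3 + 1) (L N (k - 1) + n2)
      - loss_q x (L N (k - 1) - n3 + 1) (L N (k - 1) + n1)
      - loss_q x (L N (k - 1) + n1 + 1) (L N (k - 1) + n2) < 16 * t"
    using n n3 by (intro merge_gain_less_contaminated_left) auto
  then show False using gain by (simp add: t_def)
qed

lemma AE_eventually_no_detected_pair_across_right: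
  assumes sel_min: "\<forall>N x k. k < N \<longrightarrow> is_minimizer N x k (sel N x k)"
    and pick_le: "\<forall>N x. pick N x \<le> stop_index sel Mmax beta N x"
    and pick_min: "\<forall>N x. \<forall>k\<le>stop_index sel Mmax beta N x.
                      pen_crit sel f N x (pick N x) \<le> pen_crit sel f N x k"
    and C: "C > 64 * real CARD('d) / c0"
    and k: "k \<in> {1..M0}"
    and \<eta>: "\<forall>N\<ge>N0. \<eta> N \<le> L N (k + 1) - L N k"
    and f: "\<forall>N\<ge>N0. 16 * (norm (\<mu> k - \<mu> (k + 1)))\<^sup>2 * real (\<eta> N) \<le> f N \<and> C * ln (real N) \<le> f N"
  shows "AE \<omega> in M. \<forall>\<^sub>F N in sequentially. \<not> (\<exists>n1 n2 n3.
             n1 < n2 \<and> n2 < L N k - L N (k - 1) \<and> 1 \<le> n3 \<and> n3 \<le> \<eta> N \<and>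
             two_detected (sel N (\<lambda>n. X N n \<omega>) (pick N (\<lambda>n. X N n \<omega>))) (pick N (\<lambda>n. X N n \<omega>))
               (L N (k - 1) + n1) (L N (k - 1) + n2) (L N k + n3))"
  using AE_eventually_blocks_concentrated[OF C]
proof (rule eventually_mono, goal_cases)
  case (1 \<omega>)
  with eventually_ge_at_top[of "max N0 1"] show ?case
  proof eventually_elim
    case (elim N)
    then have "\<forall>(k', p, q)\<in>blocks N. concentrated (\<lambda>n. X N n \<omega>) (\<mu> k') (f N / 16) p q"
      using f by (fastforce intro: concentrated_mono)
    then show ?case
      using elim \<eta> f by (intro no_detected_pair_across_right[OF sel_min pick_le pick_min _ _ k]) auto
  qed
qed

lemma AE_eventually_no_detected_pair_across_left:
  assumes sel_min: "\<forall>N x k. k < N \<longrightarrow> is_minimizer N x k (sel N x k)"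
    and pick_le: "\<forall>N x. pick N x \<le> stop_index sel Mmax beta N x"
    and pick_min: "\<forall>N x. \<forall>k\<le>stop_index sel Mmax beta N x.
                      pen_crit sel f N x (pick N x) \<le> pen_crit sel f N x k"
    and C: "C > 64 * real CARD('d) / c0"
    and k: "k \<in> {2..M0+1}"
    and \<eta>: "\<forall>N\<ge>N0. \<eta> N \<le> L N (k - 1) - L N (k - 2)"
    and f: "\<forall>N\<ge>N0. 16 * (norm (\<mu> (k - 1) - \<mu> k))\<^sup>2 * real (\<eta> N) \<le> f N \<and> C * ln (real N) \<le> f N"
  shows "AE \<omega> in M. \<forall>\<^sub>F N in sequentially. \<not> (\<exists>n1 n2 n3.
             1 \<le> n1 \<and> n1 < n2 \<and> n2 \<le> L N k - L N (k - 1) \<and> 1 \<le> n3 \<and> n3 \<le> \<eta> N \<and>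
             two_detected (sel N (\<lambda>n. X N n \<omega>) (pick N (\<lambda>n. X N n \<omega>))) (pick N (\<lambda>n. X N n \<omega>))
               (L N (k - 1) - n3) (L N (k - 1) + n1) (L N (k - 1) + n2))"
  using AE_eventually_blocks_concentrated[OF C]
proof (rule eventually_mono, goal_cases)
  case (1 \<omega>)
  with eventually_ge_at_top[of "max N0 1"] show ?case
  proof eventually_elim
    case (elim N)
    then have "\<forall>(k', p, q)\<in>blocks N. concentrated (\<lambda>n. X N n \<omega>) (\<mu> k') (f N / 16) p q"
      using f by (fastforce intro: concentrated_mono)
    then show ?case
      using elim \<eta> f by (intro no_detected_pair_across_left[OF sel_min pick_le pick_min _ _ k]) auto
  qed
qed

end

theorem lemma5:
  fixes M :: "'a measure"
    and X :: "nat \<Rightarrow> nat \<Rightarrow> 'a \<Rightarrow> real^'d"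
    and M0 N0 :: nat
    and L :: "nat \<Rightarrow> nat \<Rightarrow> nat"
    and G :: "nat \<Rightarrow> (real^'d) measure"
    and \<mu> :: "nat \<Rightarrow> real^'d"
    and c0 C :: real
    and Mmax :: nat
    and f :: "nat \<Rightarrow> real"
    and beta :: "nat \<Rightarrow> nat"
    and sel :: "nat \<Rightarrow> (nat \<Rightarrow> real^'d) \<Rightarrow> nat \<Rightarrow> nat \<Rightarrow> nat"
    and pick :: "nat \<Rightarrow> (nat \<Rightarrow> real^'d) \<Rightarrow> nat"
  assumes P: "prob_space M"
    and M0_pos: "M0 > 0"
    (* model (M.2), for all sample sizes N \<ge> N0 *)
    and L0: "\<forall>N\<ge>N0. L N 0 = 0"
    and Lend: "\<forall>N\<ge>N0. L N (M0 + 1) = N"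
    and Lmono: "\<forall>N\<ge>N0. \<forall>k\<le>M0. L N k < L N (Suc k)"
    and Nk_inf: "\<forall>k\<in>{1..M0+1}. filterlim (\<lambda>N. L N k - L N (k - 1)) at_top sequentially"
    and indep: "\<forall>N\<ge>N0. prob_space.indep_vars M (\<lambda>_. borel) (X N) {1..N}"
    and distr_X: "\<forall>N\<ge>N0. \<forall>k\<in>{1..M0+1}. \<forall>n\<in>{L N (k - 1) + 1 .. L N k}.
                    distr M borel (X N n) = G k"
    and mean: "\<forall>k\<in>{1..M0+1}. integrable (G k) (\<lambda>x. x) \<and> \<mu> k = (\<integral>x. x \<partial>G k)"
    and cov: "\<forall>k\<in>{1..M0+1}. integrable (G k) (\<lambda>x. (norm x)\<^sup>2)"
    and mean_change: "\<forall>k\<in>{1..M0}. \<mu> k \<noteq> \<mu> (k + 1)"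
    (* (A.4) *)
    and c0_pos: "c0 > 0"
    and subG: "\<forall>k\<in>{1..M0+1}. \<forall>i. \<forall>n\<ge>1. \<forall>a>0.
        measure (PiM {1..n} (\<lambda>_. distr (G k) borel (\<lambda>x. x $ i)))
          {z \<in> space (PiM {1..n} (\<lambda>_. distr (G k) borel (\<lambda>x. x $ i))).
             \<bar>(\<Sum>j=1..n. z j) / real n - \<mu> k $ i\<bar> \<ge> a}
        \<le> 2 * exp (- c0 * a\<^sup>2 * real n)"
    (* constant C *)
    and C_gt: "C > 64 * real CARD('d) / c0"
    (* Algorithm 2 *)
    and Mmax_pos: "Mmax \<ge> 1"
    and f_pos: "\<forall>N\<ge>N0. f N > 0"
    and sel_min: "\<forall>N x k. k < N \<longrightarrow> is_minimizer N x k (sel N x k)"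
    and pick_le: "\<forall>N x. pick N x \<le> stop_index sel Mmax beta N x"
    and pick_min: "\<forall>N x. \<forall>k\<le>stop_index sel Mmax beta N x.
                      pen_crit sel f N x (pick N x) \<le> pen_crit sel f N x k"
  shows
    "(\<forall>k (\<eta>::nat \<Rightarrow> nat). k \<in> {1..M0} \<and>
        (\<forall>N\<ge>N0. 1 \<le> \<eta> N \<and> \<eta> N \<le> L N (k + 1) - L N k) \<and>
        (\<forall>N\<ge>N0. f N \<ge> max (16 * (norm (\<mu> k - \<mu> (k + 1)))\<^sup>2 * real (\<eta> N)) (C * ln (real N)))
      \<longrightarrow> (AE \<omega> in M. \<forall>\<^sub>F N in sequentially. \<not> (\<exists>n1 n2 n3.
             n1 < n2 \<and> n2 < L N k - L N (k - 1) \<and> 1 \<le> n3 \<and> n3 \<le> \<eta> N \<and>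
             two_detected (sel N (\<lambda>n. X N n \<omega>) (pick N (\<lambda>n. X N n \<omega>))) (pick N (\<lambda>n. X N n \<omega>))
               (L N (k - 1) + n1) (L N (k - 1) + n2) (L N k + n3))))
   \<and> (\<forall>k (\<eta>::nat \<Rightarrow> nat). k \<in> {2..M0+1} \<and>
        (\<forall>N\<ge>N0. 1 \<le> \<eta> N \<and> \<eta> N \<le> L N (k - 1) - L N (k - 2)) \<and>
        (\<forall>N\<ge>N0. f N \<ge> max (16 * (norm (\<mu> (k - 1) - \<mu> k))\<^sup>2 * real (\<eta> N)) (C * ln (real N)))
      \<longrightarrow> (AE \<omega> in M. \<forall>\<^sub>F N in sequentially. \<not> (\<exists>n1 n2 n3.
             1 \<le> n1 \<and> n1 < n2 \<and> n2 \<le> L N k - L N (k - 1) \<and> 1 \<le> n3 \<and> n3 \<le> \<eta> N \<and>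
             two_detected (sel N (\<lambda>n. X N n \<omega>) (pick N (\<lambda>n. X N n \<omega>))) (pick N (\<lambda>n. X N n \<omega>))
               (L N (k - 1) - n3) (L N (k - 1) + n1) (L N (k - 1) + n2))))"
proof -
  interpret change_point_model M X N0 M0 L G \<mu> c0
    by (rule change_point_model.intro[OF P
          change_point_model_axioms.intro[OF L0 Lend Lmono indep distr_X c0_pos subG]])
  show ?thesis
    using AE_eventually_no_detected_pair_across_right[OF sel_min pick_le pick_min C_gt]
      AE_eventually_no_detected_pair_across_left[OF sel_min pick_le pick_min C_gt]
    by (intro conjI allI impI; elim conjE) auto
qed

end
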